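(* Let $\gamma\in(0,1)$ and $\mu\in(0,\infty)\setminus\{1\}$. Let $g_0:\mathbb{R}\to\mathbb{R}\cup\{-\infty\}$ satisfy $\sup g_0=\gamma$, and let $(p_n,s_n,g_n)_{n\ge1}$ be defined by the dynamics in the context. Then for all $n\ge1$: - $s_n=\sup\{\xi\in\mathbb{R}:\sup_{x\in\mathbb{R}}\Phi_\xi[g_{n-1}](x)\ge\gamma\}$; - $g_n=\pi\circ\Phi_{s_n}[g_{n-1}]$.
   Context: Let $\pi(x)=x$ if $x\ge0$ and $\pi(x)=-\infty$ otherwise (including $x=-\infty$). Write $x_+=\max(x,0)$ and use $\sup\emptyset=-\infty$. Define $\Phi_\xi[h](x)=1-\gamma-\mu(\xi-x)_++\sup_y(h(y)-|x-y|)$. The dynamics is defined for $n\ge1$ by: - $p_n(x)=\pi[1-\gamma+\sup_y(g_{n-1}(y)-\min(1,\mu)(x-y)_+)]$; - $s_n=\sup\{x:p_n(x)\ge\gamma\}$; - $g_n(x)=\pi[1-\gamma+\sup_y(g_{n-1}(y)-|x-y|-\mu(s_n-x)_+)]$. *)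

theory Defs
  imports "HOL-Library.Extended_Real"
begin

text \<open>Values in R \<union> {-\<infinity>} are modelled in ereal. pi x = x if x \<ge> 0, else -\<infinity>.\<close>
definition piE :: "ereal \<Rightarrow> ereal" where
  "piE x = (if x \<ge> 0 then x else -\<infinity>)"

definition Phi :: "real \<Rightarrow> real \<Rightarrow> ereal \<Rightarrow> (real \<Rightarrow> ereal) \<Rightarrow> real \<Rightarrow> ereal" where
  "Phi \<gamma> \<mu> \<xi> h x =
     ereal (1 - \<gamma>) - ereal \<mu> * max (\<xi> - ereal x) 0 + (SUP y. h y - ereal \<bar>x - y\<bar>)"

end

theory Submission imports Defs begin

text \<open>The maximisation over \<open>x\<close> in \<open>sup\<^sub>x \<Phi>\<^sub>\<xi>[h](x)\<close> can be carried out explicitly: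
  the cheapest way to move from \<open>y\<close> past \<open>\<xi>\<close> costs \<open>min 1 \<mu>\<close> per unit (walk at cost 1, or stay
  at \<open>y\<close> and pay \<open>\<mu>\<close>), so \<open>sup\<^sub>x \<Phi>\<^sub>\<xi>[h](x) = 1 - \<gamma> + sup\<^sub>y (h(y) - min(1,\<mu>)(\<xi> - y)\<^sub>+)\<close>.
  Since \<open>\<gamma> > 0\<close>, the threshold \<open>\<ge> \<gamma>\<close> is insensitive to \<open>\<pi>\<close>, which gives the formula for \<open>s\<^sub>n\<close>.
  The formula for \<open>g\<^sub>n\<close> is a rearrangement of the supremum, valid because every \<open>g\<^sub>k\<close>
  is bounded above; this matters when \<open>s\<^sub>n = \<infinity>\<close> and both sides must be \<open>-\<infinity>\<close>.\<close>

lemma piE_le: "piE v \<le> v"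
  unfolding piE_def by auto

lemma ereal_le_piE_iff:
  assumes "0 < \<gamma>"
  shows "ereal \<gamma> \<le> piE v \<longleftrightarrow> ereal \<gamma> \<le> v"
proof (cases "0 \<le> v")
  case False
  then have "v < ereal \<gamma>"
    using assms by (meson ereal_less(2) le_less_trans linorder_not_le order_less_le)
  then show ?thesis
    using False by (simp add: piE_def not_le)
qed (simp add: piE_def)

lemma SUP_diff_nonneg_le:
  fixes h a :: "'a \<Rightarrow> ereal"
  assumes "\<And>y. h y \<le> c" "\<And>y. 0 \<le> a y"
  shows "(SUP y. h y - a y) \<le> c"
  using assms by (meson SUP_least ereal_diff_le_self order_trans)

lemma min_penalty_le:
  fixes \<mu> \<xi> x y :: real
  assumes "0 \<le> \<mu>"
  shows "min 1 \<mu> * max (\<xi> - y) 0 \<le> \<mu> * max (\<xi> - x) 0 + \<bar>x - y\<bar>"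
proof (cases "x \<le> \<xi>")
  case True
  have "min 1 \<mu> * max (\<xi> - y) 0 \<le> min 1 \<mu> * (max (\<xi> - x) 0 + \<bar>x - y\<bar>)"
    using assms by (intro mult_left_mono) auto
  also have "\<dots> \<le> \<mu> * max (\<xi> - x) 0 + 1 * \<bar>x - y\<bar>"
    unfolding distrib_left by (intro add_mono mult_right_mono) auto
  finally show ?thesis
    by simp
next
  case False
  then have "min 1 \<mu> * max (\<xi> - y) 0 \<le> 1 * \<bar>x - y\<bar>"
    using assms by (intro mult_mono) auto
  moreover have "0 \<le> \<mu> * max (\<xi> - x) 0"
    using assms by simp
  ultimately show ?thesis
    by (metis add_increasing mult_1)
qed

lemma min_penalty_attained:
  fixes \<mu> \<xi> y :: real
  shows "\<exists>x. \<mu> * max (\<xi> - x) 0 + \<bar>x - y\<bar> = min 1 \<mu> * max (\<xi> - y) 0"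
proof (cases "\<xi> \<le> y \<or> \<mu> \<le> 1")
  case True
  then show ?thesis
    by (intro exI[of _ y]) auto
next
  case False
  then show ?thesis
    by (intro exI[of _ \<xi>]) auto
qed

lemma SUP_SUP_add_attained:
  fixes h :: "'b \<Rightarrow> ereal" and k :: "'a \<Rightarrow> 'b \<Rightarrow> real"
  assumes le: "\<And>x y. k x y \<le> m y" and attained: "\<And>y. \<exists>x. k x y = m y"
  shows "(SUP x. SUP y. h y + ereal (k x y)) = (SUP y. h y + ereal (m y))"
proof -
  have "(SUP x. h y + ereal (k x y)) = h y + ereal (m y)" for y
  proof (rule antisym)
    show "(SUP x. h y + ereal (k x y)) \<le> h y + ereal (m y)"
      using le by (intro SUP_least add_left_mono) simp
    obtain x where "k x y = m y"
      using attained by blast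
    then show "h y + ereal (m y) \<le> (SUP x. h y + ereal (k x y))"
      by (intro SUP_upper2[of x]) auto
  qed
  then show ?thesis
    by (subst SUP_commute) simp
qed

lemma ereal_add_diff_real: "ereal c + (h - ereal d) = h + ereal (c - d)"
  by (cases h) auto

lemma Phi_real_eq_SUP:
  "Phi \<gamma> \<mu> (ereal \<xi>) h x = (SUP y. h y + ereal (1 - \<gamma> - \<mu> * max (\<xi> - x) 0 - \<bar>x - y\<bar>))"
proof -
  have "Phi \<gamma> \<mu> (ereal \<xi>) h x = ereal (1 - \<gamma> - \<mu> * max (\<xi> - x) 0) + (SUP y. h y - ereal \<bar>x - y\<bar>)"
    unfolding Phi_def by (simp add: max_def zero_ereal_def)
  also have "\<dots> = (SUP y. ereal (1 - \<gamma> - \<mu> * max (\<xi> - x) 0) + (h y - ereal \<bar>x - y\<bar>))"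
    by (rule SUP_ereal_add_right[symmetric]) auto
  finally show ?thesis
    by (simp only: ereal_add_diff_real)
qed

lemma SUP_Phi:
  assumes "0 \<le> \<mu>"
  shows "(SUP x. Phi \<gamma> \<mu> (ereal \<xi>) h x)
       = ereal (1 - \<gamma>) + (SUP y. h y - ereal (min 1 \<mu> * max (\<xi> - y) 0))"
proof -
  have "(SUP x. Phi \<gamma> \<mu> (ereal \<xi>) h x)
      = (SUP y. h y + ereal (1 - \<gamma> - min 1 \<mu> * max (\<xi> - y) 0))"
    unfolding Phi_real_eq_SUP
  proof (rule SUP_SUP_add_attained)
    show "1 - \<gamma> - \<mu> * max (\<xi> - x) 0 - \<bar>x - y\<bar> \<le> 1 - \<gamma> - min 1 \<mu> * max (\<xi> - y) 0"
      for x y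
      using min_penalty_le[OF assms, of \<xi> y x] by linarith
    show "\<exists>x. 1 - \<gamma> - \<mu> * max (\<xi> - x) 0 - \<bar>x - y\<bar> = 1 - \<gamma> - min 1 \<mu> * max (\<xi> - y) 0"
      for y
    proof -
      obtain x where "\<mu> * max (\<xi> - x) 0 + \<bar>x - y\<bar> = min 1 \<mu> * max (\<xi> - y) 0"
        using min_penalty_attained by blast
      then show ?thesis
        by (intro exI[of _ x]) linarith
    qed
  qed
  also have "\<dots> = ereal (1 - \<gamma>) + (SUP y. h y - ereal (min 1 \<mu> * max (\<xi> - y) 0))"
    by (simp add: SUP_ereal_add_right[symmetric] ereal_add_diff_real)
  finally show ?thesis .
qed

lemma Phi_eq_SUP_penalized:
  fixes h :: "real \<Rightarrow> ereal"
  assumes "0 < \<mu>" and bounded: "\<And>y. h y \<le> ereal B"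
  shows "Phi \<gamma> \<mu> \<sigma> h x
       = ereal (1 - \<gamma>) + (SUP y. h y - ereal \<bar>x - y\<bar> - ereal \<mu> * max (\<sigma> - ereal x) 0)"
proof -
  define S where "S = (SUP y. h y - ereal \<bar>x - y\<bar>)"
  have S_bounded: "S \<le> ereal B"
    unfolding S_def using bounded by (rule SUP_diff_nonneg_le) simp
  show ?thesis
  proof (cases \<sigma>)
    case (real r)
    define c where "c = \<mu> * max (r - x) 0"
    have penalty: "ereal \<mu> * max (\<sigma> - ereal x) 0 = ereal c"
      unfolding c_def real by (simp add: max_def zero_ereal_def)
    have "(SUP y. h y - ereal \<bar>x - y\<bar> - ereal c) = S - ereal c"
      unfolding S_def by (rule SUP_ereal_minus_left) auto
    moreover have "ereal (1 - \<gamma>) - ereal c + S = ereal (1 - \<gamma>) + (S - ereal c)"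
      by (cases S) simp_all
    ultimately show ?thesis
      unfolding Phi_def penalty S_def[symmetric] by simp
  next
    case PInf
    have penalty: "ereal \<mu> * max (\<sigma> - ereal x) 0 = \<infinity>"
      using PInf \<open>0 < \<mu>\<close> by simp
    have "h y - ereal \<bar>x - y\<bar> - \<infinity> = -\<infinity>" for y
      using bounded[of y] by (cases "h y") simp_all
    moreover have "ereal (1 - \<gamma>) - \<infinity> + S = -\<infinity>"
      using S_bounded by (cases S) simp_all
    ultimately show ?thesis
      unfolding Phi_def penalty S_def[symmetric] by simp
  next
    case MInf
    then have penalty: "ereal \<mu> * max (\<sigma> - ereal x) 0 = 0"
      by (simp add: max_def)
    show ?thesis
      unfolding Phi_def penalty S_def by simp
  qed
qed

lemma penalized_step_bounded:
  fixes h :: "real \<Rightarrow> ereal"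
  assumes "0 \<le> \<mu>" and bounded: "\<And>y. h y \<le> ereal B"
  shows "piE (ereal c + (SUP y. h y - ereal \<bar>x - y\<bar> - ereal \<mu> * max (\<sigma> - ereal x) 0))
       \<le> ereal (c + B)"
proof -
  have "h y - ereal \<bar>x - y\<bar> \<le> ereal B" for y
    by (rule order_trans[OF ereal_diff_le_self bounded]) simp
  moreover have "0 \<le> ereal \<mu> * max (\<sigma> - ereal x) 0"
    using \<open>0 \<le> \<mu>\<close> by simp
  ultimately have "(SUP y. h y - ereal \<bar>x - y\<bar> - ereal \<mu> * max (\<sigma> - ereal x) 0) \<le> ereal B"
    by (rule SUP_diff_nonneg_le)
  then have "ereal c + (SUP y. h y - ereal \<bar>x - y\<bar> - ereal \<mu> * max (\<sigma> - ereal x) 0)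
      \<le> ereal (c + B)"
    by (metis add_left_mono plus_ereal.simps(1))
  then show ?thesis
    using piE_le order_trans by blast
qed

theorem propositionS2p4:
  fixes \<gamma> \<mu> :: real
    and p g :: "nat \<Rightarrow> real \<Rightarrow> ereal"
    and s :: "nat \<Rightarrow> ereal"
  assumes "0 < \<gamma>" "\<gamma> < 1" "0 < \<mu>" "\<mu> \<noteq> 1"
    and g0_fin: "\<And>x. g 0 x \<noteq> \<infinity>"
    and g0_sup: "(SUP x. g 0 x) = ereal \<gamma>"
    and p_def: "\<And>n x. n \<ge> 1 \<Longrightarrow>
       p n x = piE (ereal (1 - \<gamma>) + (SUP y. g (n - 1) y - ereal (min 1 \<mu> * max (x - y) 0)))"
    and s_def: "\<And>n. n \<ge> 1 \<Longrightarrow> s n = Sup {ereal x | x. p n x \<ge> ereal \<gamma>}"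
    and g_def: "\<And>n x. n \<ge> 1 \<Longrightarrow>
       g n x = piE (ereal (1 - \<gamma>) +
         (SUP y. g (n - 1) y - ereal \<bar>x - y\<bar> - ereal \<mu> * max (s n - ereal x) 0))"
    and "n \<ge> 1"
  shows "s n = Sup {ereal \<xi> | \<xi>. (SUP x. Phi \<gamma> \<mu> (ereal \<xi>) (g (n - 1)) x) \<ge> ereal \<gamma>}
       \<and> g n = (\<lambda>x. piE (Phi \<gamma> \<mu> (s n) (g (n - 1)) x))"
proof -
  have bounded: "\<exists>B. \<forall>y. g k y \<le> ereal B" for k
  proof (induction k)
    case 0
    then show ?case
      using g0_sup by (metis SUP_upper UNIV_I)
  next
    case (Suc k)
    then obtain B where "\<And>y. g k y \<le> ereal B"
      by blast
    then have "g (Suc k) x \<le> ereal (1 - \<gamma> + B)" for x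
      unfolding g_def[of "Suc k" x, simplified] using \<open>0 < \<mu>\<close>
      by (intro penalized_step_bounded) auto
    then show ?case
      by blast
  qed
  then obtain B where B: "\<And>y. g (n - 1) y \<le> ereal B"
    by blast
  have "p n \<xi> \<ge> ereal \<gamma> \<longleftrightarrow> (SUP x. Phi \<gamma> \<mu> (ereal \<xi>) (g (n - 1)) x) \<ge> ereal \<gamma>" for \<xi>
    unfolding p_def[OF \<open>1 \<le> n\<close>] SUP_Phi[OF less_imp_le[OF \<open>0 < \<mu>\<close>]]
    by (rule ereal_le_piE_iff[OF \<open>0 < \<gamma>\<close>])
  then have "s n = Sup {ereal \<xi> | \<xi>. (SUP x. Phi \<gamma> \<mu> (ereal \<xi>) (g (n - 1)) x) \<ge> ereal \<gamma>}"
    unfolding s_def[OF \<open>1 \<le> n\<close>] by simp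
  moreover have "g n x = piE (Phi \<gamma> \<mu> (s n) (g (n - 1)) x)" for x
    unfolding g_def[OF \<open>1 \<le> n\<close>] Phi_eq_SUP_penalized[OF \<open>0 < \<mu>\<close> B] ..
  ultimately show ?thesis
    by blast
qed

end
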